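(* Let $T$ be a tower gadget of height $h\in\mathbb{N}$ and let $M_1,M_2$ be two perfect matchings of $T$ that are both in semi-default state. Then there exists a well-behaved flip sequence $(P_1,\dots,P_{2h})$ for $T$ starting from $M_1$, of length exactly $2h$, with $M_1\triangle P_1\triangle\cdots\triangle P_{2h}=M_2$.
   Context: A tower gadget of height $h$ is the graph on vertices $\{v,w\}\cup\{a_i,b_i: 0\le i\le h\}$ with edge set $\{va_0,b_0w\}\cup\{a_ib_i:0\le i\le h\}\cup\{a_ia_{i-1},b_ib_{i-1}:1\le i\le h\}$. A perfect matching $M$ of $T$ is in semi-default state if $va_0,b_0w\in M$. A path is alternating w.r.t. an edge set $S$ if its consecutive edges alternate between belonging and not belonging to $S$ (it may start or end with either kind). A well-behaved flip sequence for $T$ starting from $M$ is a sequence $(P_1,\dots,P_d)$ where each $P_i$ is a path from $v$ to $w$ inside $T$ that is alternating with respect to $M\triangle P_1\triangle\cdots\triangle P_{i-1}$ ($\triangle$ = symmetric difference). *)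

theory Defs
  imports Main
begin

datatype tvert = Vv | Ww | Av nat | Bv nat

definition tower_verts :: "nat \<Rightarrow> tvert set" where
  "tower_verts h = {Vv, Ww} \<union> Av ` {0..h} \<union> Bv ` {0..h}"

definition tower_edges :: "nat \<Rightarrow> tvert set set" where
  "tower_edges h = {{Vv, Av 0}, {Bv 0, Ww}}
     \<union> {{Av i, Bv i} | i. i \<le> h}
     \<union> {{Av i, Av (i - 1)} | i. 1 \<le> i \<and> i \<le> h}
     \<union> {{Bv i, Bv (i - 1)} | i. 1 \<le> i \<and> i \<le> h}"

definition perfect_matching :: "'a set set \<Rightarrow> 'a set \<Rightarrow> 'a set set \<Rightarrow> bool" where
  "perfect_matching E V M \<longleftrightarrow> M \<subseteq> E \<and> (\<forall>x\<in>V. \<exists>!e. e \<in> M \<and> x \<in> e)"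

definition semi_default :: "tvert set set \<Rightarrow> bool" where
  "semi_default M \<longleftrightarrow> {Vv, Av 0} \<in> M \<and> {Bv 0, Ww} \<in> M"

definition symdiff :: "'a set \<Rightarrow> 'a set \<Rightarrow> 'a set" where
  "symdiff A B = (A - B) \<union> (B - A)"

definition is_path :: "'a set set \<Rightarrow> 'a list \<Rightarrow> 'a \<Rightarrow> 'a \<Rightarrow> bool" where
  "is_path E xs u v \<longleftrightarrow> xs \<noteq> [] \<and> hd xs = u \<and> last xs = v \<and> distinct xs \<and>
     (\<forall>i. Suc i < length xs \<longrightarrow> {xs ! i, xs ! Suc i} \<in> E)"

definition path_edges :: "'a list \<Rightarrow> 'a set set" where
  "path_edges xs = {{xs ! i, xs ! Suc i} | i. Suc i < length xs}"

definition alternating :: "'a set set \<Rightarrow> 'a list \<Rightarrow> bool" where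
  "alternating S xs \<longleftrightarrow> (\<forall>i. Suc (Suc i) < length xs \<longrightarrow>
     ({xs ! i, xs ! Suc i} \<in> S \<longleftrightarrow> {xs ! Suc i, xs ! Suc (Suc i)} \<notin> S))"

fun flip_all :: "'a set set \<Rightarrow> 'a list list \<Rightarrow> 'a set set" where
  "flip_all M [] = M"
| "flip_all M (P # Ps) = flip_all (symdiff M (path_edges P)) Ps"

definition well_behaved :: "nat \<Rightarrow> tvert set set \<Rightarrow> tvert list list \<Rightarrow> bool" where
  "well_behaved h M Ps \<longleftrightarrow> (\<forall>i < length Ps.
      is_path (tower_edges h) (Ps ! i) Vv Ww \<and>
      alternating (flip_all M (take i Ps)) (Ps ! i))"

end

(*
  A semi-default perfect matching of the tower consists of the edges v a_0 and b_0 w together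
  with a tiling of the ladder on the levels 1..h by rungs a_i b_i and by pairs of rails
  a_i a_(i+1), b_i b_(i+1); it is encoded by a word over these two tiles of total width h.
  Flipping the v-w path that climbs the a-side to level j, crosses the rung j and descends the
  b-side turns such a matching into a perfect matching of the ladder on the levels 0..h that
  leaves v and w exposed, and flipping a second such path returns to a semi-default matching.
  Each path is alternating because the edge sets before and after its flip are both matchings.
  Such double flips merge the first two rungs of a word into pairs of rails, and two words with a
  single rung each are one double flip apart. A word of width h has at most h rungs, as many as h
  modulo 2, so any two words are at most h double flips apart; flipping the path through rung 0
  twice pads the sequence to exactly 2h flips.
*)
theory Submission
  imports Defs
begin

lemma symdiff_symdiff_cancel: "symdiff (symdiff A B) B = A"
  unfolding symdiff_def by blast

lemma symdiff_empty_right [simp]: "symdiff A {} = A"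
  unfolding symdiff_def by blast

lemma symdiff_insert_right: "x \<notin> A \<Longrightarrow> x \<notin> B \<Longrightarrow> symdiff A (insert x B) = insert x (symdiff A B)"
  unfolding symdiff_def by blast

lemma symdiff_insert_insert: "x \<notin> A \<Longrightarrow> x \<notin> B \<Longrightarrow> symdiff (insert x A) (insert x B) = symdiff A B"
  unfolding symdiff_def by blast

lemma path_edges_conv_zip: "path_edges xs = (\<lambda>(a, b). {a, b}) ` set (zip xs (tl xs))"
  unfolding path_edges_def set_zip by (force simp: nth_tl)

lemma path_edges_Cons_Cons:
  "path_edges (x # y # xs) = insert {x, y} (path_edges (y # xs))"
  by (simp add: path_edges_conv_zip)

lemma path_edges_singleton: "path_edges [x] = {}"
  by (simp add: path_edges_conv_zip)

lemma path_edges_snoc: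
  "xs \<noteq> [] \<Longrightarrow> path_edges (xs @ [y]) = insert {last xs, y} (path_edges xs)"
  by (induction xs rule: induct_list012)
    (auto simp: path_edges_Cons_Cons path_edges_singleton)

lemma path_edges_Cons_snoc:
  assumes "xs \<noteq> []"
  shows "path_edges (x # xs @ [y]) = insert {x, hd xs} (insert {last xs, y} (path_edges xs))"
proof -
  obtain z zs where "xs = z # zs"
    using assms by (cases xs) auto
  then show ?thesis
    using path_edges_snoc[of xs y] by (simp add: path_edges_Cons_Cons)
qed

lemma path_edges_subset_set: "e \<in> path_edges xs \<Longrightarrow> e \<subseteq> set xs"
  unfolding path_edges_def by auto

lemma is_path_iff:
  "is_path E xs u v \<longleftrightarrow>
     xs \<noteq> [] \<and> hd xs = u \<and> last xs = v \<and> distinct xs \<and> path_edges xs \<subseteq> E"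
  unfolding is_path_def path_edges_def by blast

definition matching :: "'a set set \<Rightarrow> bool" where
  "matching S \<longleftrightarrow> (\<forall>e\<in>S. \<forall>e'\<in>S. e \<noteq> e' \<longrightarrow> e \<inter> e' = {})"

lemma alternating_if_matchings:
  assumes "matching S" and "matching (symdiff S (path_edges xs))" and "distinct xs"
  shows "alternating S xs"
  unfolding alternating_def
proof (intro allI impI)
  fix i
  assume i: "Suc (Suc i) < length xs"
  let ?e = "{xs ! i, xs ! Suc i}" and ?e' = "{xs ! Suc i, xs ! Suc (Suc i)}"
  have "xs ! i \<noteq> xs ! Suc i" "xs ! i \<noteq> xs ! Suc (Suc i)"
    using assms(3) i by (simp_all add: nth_eq_iff_index_eq)
  then have adjacent: "?e \<noteq> ?e'" "?e \<inter> ?e' \<noteq> {}"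
    by (auto simp: doubleton_eq_iff)
  have not_both: "\<not> (?e \<in> T \<and> ?e' \<in> T)" if "matching T" for T
    using that adjacent unfolding matching_def by fast
  have "?e \<in> path_edges xs" and "?e' \<in> path_edges xs"
    unfolding path_edges_def using i by force+
  then have "?e \<notin> S \<Longrightarrow> ?e' \<notin> S \<Longrightarrow> ?e \<in> symdiff S (path_edges xs) \<and> ?e' \<in> symdiff S (path_edges xs)"
    unfolding symdiff_def by simp
  then show "?e \<in> S \<longleftrightarrow> ?e' \<notin> S"
    using not_both[OF assms(1)] not_both[OF assms(2)] by argo
qed

lemma perfect_matching_eq_if_covering_subset:
  assumes "perfect_matching E V M" and "N \<subseteq> M" and "V \<subseteq> \<Union> N"
    and "\<And>e. e \<in> E \<Longrightarrow> e \<inter> V \<noteq> {}"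
  shows "N = M"
proof
  have unique: "e = e'" if "z \<in> V" "e \<in> M" "e' \<in> M" "z \<in> e" "z \<in> e'" for z e e'
    using assms(1) that unfolding perfect_matching_def by blast
  show "M \<subseteq> N"
  proof
    fix e
    assume "e \<in> M"
    then have "e \<in> E"
      using assms(1) unfolding perfect_matching_def by blast
    then obtain z where z: "z \<in> e" "z \<in> V"
      using assms(4) by blast
    then obtain e' where "e' \<in> N" "z \<in> e'"
      using assms(3) by blast
    then show "e \<in> N"
      using unique[OF z(2) \<open>e \<in> M\<close> _ z(1)] assms(2) by blast
  qed
qed (rule assms(2))

section \<open>The tower gadget\<close>

lemma tower_edges_start: "{Vv, Av 0} \<in> tower_edges h"
  unfolding tower_edges_def by simp

lemma tower_edges_end: "{Bv 0, Ww} \<in> tower_edges h"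
  unfolding tower_edges_def by simp

lemma tower_edges_rung: "i \<le> h \<Longrightarrow> {Av i, Bv i} \<in> tower_edges h"
  unfolding tower_edges_def by auto

lemma tower_edges_rail_A:
  assumes "i < h"
  shows "{Av i, Av (Suc i)} \<in> tower_edges h"
proof -
  have "{Av (Suc i), Av (Suc i - 1)} \<in> {{Av k, Av (k - 1)} | k. 1 \<le> k \<and> k \<le> h}"
    using assms by fastforce
  then show ?thesis
    unfolding tower_edges_def by (simp add: insert_commute)
qed

lemma tower_edges_rail_B:
  assumes "i < h"
  shows "{Bv i, Bv (Suc i)} \<in> tower_edges h"
proof -
  have "{Bv (Suc i), Bv (Suc i - 1)} \<in> {{Bv k, Bv (k - 1)} | k. 1 \<le> k \<and> k \<le> h}"
    using assms by fastforce
  then show ?thesis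
    unfolding tower_edges_def by (simp add: insert_commute)
qed

lemma tower_edges_cases:
  assumes "e \<in> tower_edges h"
  obtains "e = {Vv, Av 0}" | "e = {Bv 0, Ww}" | i where "i \<le> h" "e = {Av i, Bv i}"
    | i where "i < h" "e = {Av i, Av (Suc i)}" | i where "i < h" "e = {Bv i, Bv (Suc i)}"
proof -
  from assms consider "e = {Vv, Av 0}" | "e = {Bv 0, Ww}" | "\<exists>i\<le>h. e = {Av i, Bv i}"
    | "\<exists>i. 1 \<le> i \<and> i \<le> h \<and> e = {Av i, Av (i - 1)}"
    | "\<exists>i. 1 \<le> i \<and> i \<le> h \<and> e = {Bv i, Bv (i - 1)}"
    unfolding tower_edges_def by blast
  then show ?thesis
  proof cases
    case 4
    then obtain i where "1 \<le> i" "i \<le> h" "e = {Av (Suc (i - 1)), Av (i - 1)}"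
      by auto
    then show ?thesis
      using that(4)[of "i - 1"] by (simp add: insert_commute)
  next
    case 5
    then obtain i where "1 \<le> i" "i \<le> h" "e = {Bv (Suc (i - 1)), Bv (i - 1)}"
      by auto
    then show ?thesis
      using that(5)[of "i - 1"] by (simp add: insert_commute)
  qed (use that in auto)
qed

lemma tower_edges_meet_verts: "e \<in> tower_edges h \<Longrightarrow> e \<inter> tower_verts h \<noteq> {}"
  by (erule tower_edges_cases) (auto simp: tower_verts_def)

definition ladder_part :: "nat \<Rightarrow> nat \<Rightarrow> tvert set" where
  "ladder_part k n = {z. \<exists>i. k \<le> i \<and> i < k + n \<and> (z = Av i \<or> z = Bv i)}"

lemma Av_in_ladder_part [simp]: "Av i \<in> ladder_part k n \<longleftrightarrow> k \<le> i \<and> i < k + n"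
  by (simp add: ladder_part_def)

lemma Bv_in_ladder_part [simp]: "Bv i \<in> ladder_part k n \<longleftrightarrow> k \<le> i \<and> i < k + n"
  by (simp add: ladder_part_def)

lemma Vv_notin_ladder_part [simp]: "Vv \<notin> ladder_part k n"
  by (simp add: ladder_part_def)

lemma Ww_notin_ladder_part [simp]: "Ww \<notin> ladder_part k n"
  by (simp add: ladder_part_def)

lemma ladder_part_0 [simp]: "ladder_part k 0 = {}"
  by (simp add: ladder_part_def)

lemma ladder_part_Suc:
  "ladder_part k (Suc n) = insert (Av k) (insert (Bv k) (ladder_part (Suc k) n))"
  unfolding ladder_part_def by (auto simp: le_eq_less_or_eq Suc_le_eq)

fun ladder_turn :: "nat \<Rightarrow> nat \<Rightarrow> tvert list" where
  "ladder_turn k 0 = [Av k, Bv k]"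
| "ladder_turn k (Suc j) = Av k # ladder_turn (Suc k) j @ [Bv k]"

definition tower_path :: "nat \<Rightarrow> tvert list" where
  "tower_path j = Vv # ladder_turn 0 j @ [Ww]"

lemma ladder_turn_not_Nil [simp]: "ladder_turn k j \<noteq> []"
  by (cases j) simp_all

lemma hd_ladder_turn [simp]: "hd (ladder_turn k j) = Av k"
  by (cases j) simp_all

lemma last_ladder_turn [simp]: "last (ladder_turn k j) = Bv k"
  by (cases j) simp_all

lemma set_ladder_turn: "set (ladder_turn k j) = ladder_part k (Suc j)"
  by (induction j arbitrary: k) (auto simp: ladder_part_Suc)

lemma distinct_ladder_turn: "distinct (ladder_turn k j)"
  by (induction j arbitrary: k) (auto simp: set_ladder_turn ladder_part_def)

lemma path_edges_ladder_turn_0: "path_edges (ladder_turn k 0) = {{Av k, Bv k}}"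
  by (simp add: path_edges_Cons_Cons path_edges_singleton)

lemma path_edges_ladder_turn_Suc:
  "path_edges (ladder_turn k (Suc j)) =
     insert {Av k, Av (Suc k)} (insert {Bv k, Bv (Suc k)} (path_edges (ladder_turn (Suc k) j)))"
  by (simp add: path_edges_Cons_snoc insert_commute)

lemma ladder_turn_edges_below:
  assumes "i < k"
  shows "{Av i, z} \<notin> path_edges (ladder_turn k j)" and "{Bv i, z} \<notin> path_edges (ladder_turn k j)"
  using assms path_edges_subset_set[of _ "ladder_turn k j"] by (fastforce simp: set_ladder_turn)+

lemma path_edges_ladder_turn_subset:
  "k + j \<le> h \<Longrightarrow> path_edges (ladder_turn k j) \<subseteq> tower_edges h"
  by (induction j arbitrary: k)
    (simp_all add: path_edges_ladder_turn_0 path_edges_ladder_turn_Suc tower_edges_rung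
      tower_edges_rail_A tower_edges_rail_B del: ladder_turn.simps)

lemma path_edges_tower_path:
  "path_edges (tower_path j) = insert {Vv, Av 0} (insert {Bv 0, Ww} (path_edges (ladder_turn 0 j)))"
  by (simp add: tower_path_def path_edges_Cons_snoc insert_commute)

lemma tower_path_is_path: "j \<le> h \<Longrightarrow> is_path (tower_edges h) (tower_path j) Vv Ww"
  using path_edges_ladder_turn_subset[of 0 j h] distinct_ladder_turn[of 0 j]
  unfolding is_path_iff path_edges_tower_path
  by (auto simp: tower_path_def set_ladder_turn ladder_part_def tower_edges_start tower_edges_end)

section \<open>Tilings of the ladder\<close>

datatype tile = Rung | Rails

fun tiling_width :: "tile list \<Rightarrow> nat" where
  "tiling_width [] = 0"
| "tiling_width (Rung # w) = Suc (tiling_width w)"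
| "tiling_width (Rails # w) = Suc (Suc (tiling_width w))"

fun tiling_edges :: "nat \<Rightarrow> tile list \<Rightarrow> tvert set set" where
  "tiling_edges k [] = {}"
| "tiling_edges k (Rung # w) = insert {Av k, Bv k} (tiling_edges (Suc k) w)"
| "tiling_edges k (Rails # w) =
     insert {Av k, Av (Suc k)} (insert {Bv k, Bv (Suc k)} (tiling_edges (Suc (Suc k)) w))"

definition tower_matching :: "tile list \<Rightarrow> tvert set set" where
  "tower_matching w = insert {Vv, Av 0} (insert {Bv 0, Ww} (tiling_edges 1 w))"

lemma Union_tiling_edges: "\<Union> (tiling_edges k w) = ladder_part k (tiling_width w)"
  by (induction k w rule: tiling_edges.induct) (simp_all add: ladder_part_Suc insert_commute)

lemma tiling_edges_subset: "e \<in> tiling_edges k w \<Longrightarrow> e \<subseteq> ladder_part k (tiling_width w)"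
  using Union_tiling_edges[of k w] by blast

lemma tiling_edges_below:
  assumes "i < k"
  shows "{Av i, z} \<notin> tiling_edges k w" and "{Bv i, z} \<notin> tiling_edges k w"
  using assms tiling_edges_subset[of _ k w] by fastforce+

lemma matching_tiling_edges: "matching (tiling_edges k w)"
proof (induction k w rule: tiling_edges.induct)
  case (2 k w)
  then show ?case
    using tiling_edges_subset[of _ "Suc k" w] unfolding matching_def by fastforce
next
  case (3 k w)
  then show ?case
    using tiling_edges_subset[of _ "Suc (Suc k)" w] unfolding matching_def by fastforce
qed (simp add: matching_def)

lemma matching_tower_matching: "matching (tower_matching w)"
  using matching_tiling_edges[of 1 w] tiling_edges_subset[of _ 1 w]
  unfolding matching_def tower_matching_def by fastforce

(* path_flip j w w' records how flipping tower_path j changes tower_matching w into the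
  tiling tiling_edges 0 w' of the levels 0..h, see symdiff_tower_matching_tower_path. *)
inductive path_flip :: "nat \<Rightarrow> tile list \<Rightarrow> tile list \<Rightarrow> bool" where
  flip_rung: "path_flip 0 w (Rung # w)"
| flip_rails: "path_flip 1 (Rung # w) (Rails # w)"
| flip_up: "path_flip j w w' \<Longrightarrow> path_flip (Suc (Suc j)) (Rails # w) (Rails # w')"

lemma path_flip_width:
  "path_flip j w w' \<Longrightarrow> tiling_width w' = Suc (tiling_width w) \<and> j \<le> tiling_width w"
  by (induction rule: path_flip.induct) simp_all

lemma symdiff_tiling_edges_ladder_turn:
  "path_flip j w w' \<Longrightarrow>
     symdiff (tiling_edges (Suc k) w) (path_edges (ladder_turn k j)) = tiling_edges k w'"
proof (induction arbitrary: k rule: path_flip.induct)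
  case (flip_rung w)
  then show ?case
    by (simp add: path_edges_ladder_turn_0 symdiff_insert_right tiling_edges_below
        del: ladder_turn.simps)
next
  case (flip_rails w)
  then show ?case
    by (simp add: path_edges_ladder_turn_0 path_edges_ladder_turn_Suc symdiff_insert_right
        symdiff_insert_insert doubleton_eq_iff tiling_edges_below del: ladder_turn.simps)
next
  case (flip_up j w w')
  then show ?case
    by (simp add: path_edges_ladder_turn_Suc symdiff_insert_right symdiff_insert_insert
        doubleton_eq_iff tiling_edges_below ladder_turn_edges_below del: ladder_turn.simps)
qed

lemma symdiff_tower_matching_tower_path:
  assumes "path_flip j w w'"
  shows "symdiff (tower_matching w) (path_edges (tower_path j)) = tiling_edges 0 w'"
proof -
  have "{Vv, Av 0} \<notin> tiling_edges 1 w" "{Bv 0, Ww} \<notin> tiling_edges 1 w"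
    using tiling_edges_subset[of _ 1 w] by fastforce+
  moreover have "{Vv, Av 0} \<notin> path_edges (ladder_turn 0 j)" "{Bv 0, Ww} \<notin> path_edges (ladder_turn 0 j)"
    using path_edges_subset_set[of _ "ladder_turn 0 j"] by (fastforce simp: set_ladder_turn)+
  ultimately show ?thesis
    using symdiff_tiling_edges_ladder_turn[OF assms, of 0]
    by (simp add: tower_matching_def path_edges_tower_path symdiff_insert_insert doubleton_eq_iff)
qed

section \<open>Flip sequences between semi-default matchings\<close>

lemma well_behaved_Nil [simp]: "well_behaved h M []"
  by (simp add: well_behaved_def)

lemma well_behaved_Cons:
  "well_behaved h M (P # Ps) \<longleftrightarrow>
     is_path (tower_edges h) P Vv Ww \<and> alternating M P \<and>
     well_behaved h (symdiff M (path_edges P)) Ps"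
  unfolding well_behaved_def by (simp add: All_less_Suc2)

lemma flip_all_append: "flip_all M (Ps @ Qs) = flip_all (flip_all M Ps) Qs"
  by (induction Ps arbitrary: M) simp_all

lemma well_behaved_append:
  "well_behaved h M (Ps @ Qs) \<longleftrightarrow> well_behaved h M Ps \<and> well_behaved h (flip_all M Ps) Qs"
  by (induction Ps arbitrary: M) (simp_all add: well_behaved_Cons)

definition flip_reachable :: "nat \<Rightarrow> tvert set set \<Rightarrow> nat \<Rightarrow> tvert set set \<Rightarrow> bool" where
  "flip_reachable h M n M' \<longleftrightarrow> (\<exists>Ps. length Ps = n \<and> well_behaved h M Ps \<and> flip_all M Ps = M')"

lemma flip_reachable_0: "flip_reachable h M 0 M"
  unfolding flip_reachable_def by simp

lemma flip_reachable_trans: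
  assumes "flip_reachable h M n M'" and "flip_reachable h M' m M''"
  shows "flip_reachable h M (n + m) M''"
proof -
  obtain Ps Qs where "length Ps = n" "well_behaved h M Ps" "flip_all M Ps = M'"
    and "length Qs = m" "well_behaved h M' Qs" "flip_all M' Qs = M''"
    using assms unfolding flip_reachable_def by blast
  then show ?thesis
    unfolding flip_reachable_def
    by (intro exI[of _ "Ps @ Qs"]) (simp add: well_behaved_append flip_all_append)
qed

definition flip_adjacent :: "tile list \<Rightarrow> tile list \<Rightarrow> bool" where
  "flip_adjacent w w' \<longleftrightarrow> (\<exists>j j' v. path_flip j w v \<and> path_flip j' w' v)"

lemma flip_adjacent_sym: "flip_adjacent w w' \<Longrightarrow> flip_adjacent w' w"
  unfolding flip_adjacent_def by blast

lemma flip_adjacent_refl: "flip_adjacent w w"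
  unfolding flip_adjacent_def by (blast intro: flip_rung)

lemma flip_adjacent_width: "flip_adjacent w w' \<Longrightarrow> tiling_width w' = tiling_width w"
  unfolding flip_adjacent_def by (metis path_flip_width Suc_inject)

lemma flip_reachable_if_flip_adjacent:
  assumes "flip_adjacent w w'" and "tiling_width w = h"
  shows "flip_reachable h (tower_matching w) 2 (tower_matching w')"
proof -
  obtain j j' v where flips: "path_flip j w v" "path_flip j' w' v"
    using assms(1) unfolding flip_adjacent_def by blast
  then have "j \<le> h" "j' \<le> h"
    using path_flip_width[OF flips(1)] path_flip_width[OF flips(2)] assms(2) by simp_all
  then have paths: "is_path (tower_edges h) (tower_path j) Vv Ww"
    "is_path (tower_edges h) (tower_path j') Vv Ww"
    using tower_path_is_path by blast+
  have outward: "symdiff (tower_matching w) (path_edges (tower_path j)) = tiling_edges 0 v"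
    using symdiff_tower_matching_tower_path[OF flips(1)] .
  have inward: "symdiff (tiling_edges 0 v) (path_edges (tower_path j')) = tower_matching w'"
    using symdiff_tower_matching_tower_path[OF flips(2)] symdiff_symdiff_cancel by metis
  have "alternating (tower_matching w) (tower_path j)"
    using alternating_if_matchings[of "tower_matching w" "tower_path j"] paths(1) outward
    by (simp add: matching_tower_matching matching_tiling_edges is_path_iff)
  moreover have "alternating (tiling_edges 0 v) (tower_path j')"
    using alternating_if_matchings[of "tiling_edges 0 v" "tower_path j'"] paths(2) inward
    by (simp add: matching_tower_matching matching_tiling_edges is_path_iff)
  ultimately show ?thesis
    unfolding flip_reachable_def using paths outward inward
    by (intro exI[of _ "[tower_path j, tower_path j']"]) (simp add: well_behaved_Cons)
qed

lemma flip_reachable_self: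
  "tiling_width w = h \<Longrightarrow> flip_reachable h (tower_matching w) (2 * n) (tower_matching w)"
proof (induction n)
  case 0
  then show ?case
    using flip_reachable_0 by simp
next
  case (Suc n)
  then show ?case
    using flip_reachable_trans[OF flip_reachable_if_flip_adjacent[OF flip_adjacent_refl]] by fastforce
qed

section \<open>Connecting two tilings\<close>

lemma tiling_width_conv_count:
  "tiling_width w = count_list w Rung + 2 * count_list w Rails"
proof (induction w)
  case (Cons t w)
  then show ?case
    by (cases t) simp_all
qed simp

lemma rung_free_tilings_eq:
  "Rung \<notin> set w \<Longrightarrow> Rung \<notin> set w' \<Longrightarrow> tiling_width w = tiling_width w' \<Longrightarrow> w = w'"
proof (induction w arbitrary: w')
  case Nil
  then show ?case
    by (cases w' rule: tiling_width.cases) simp_all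
next
  case (Cons t w)
  show ?case
  proof (cases w' rule: tiling_width.cases)
    case (3 u)
    then show ?thesis
      using Cons.prems Cons.IH[of u] by (cases t) simp_all
  qed (use Cons.prems in \<open>cases t; simp\<close>)+
qed

lemma rung_mem_if_count_pos: "0 < count_list w Rung \<Longrightarrow> Rung \<in> set w"
  by (metis count_list_0_iff less_irrefl)

lemma path_flip_absorbing_rung:
  "Rung \<in> set w \<Longrightarrow> \<exists>j w'. path_flip j w w' \<and> Suc (count_list w' Rung) = count_list w Rung"
proof (induction w)
  case (Cons t w)
  show ?case
  proof (cases t)
    case Rung
    then show ?thesis
      using flip_rails[of w] by fastforce
  next
    case Rails
    then show ?thesis
      using Cons flip_up by fastforce
  qed
qed simp

lemma path_flip_removing_rung:
  "Rung \<in> set w' \<Longrightarrow> \<exists>j w. path_flip j w w' \<and> Suc (count_list w Rung) = count_list w' Rung"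
proof (induction w')
  case (Cons t w')
  show ?case
  proof (cases t)
    case Rung
    then show ?thesis
      using flip_rung[of w'] by fastforce
  next
    case Rails
    then show ?thesis
      using Cons flip_up by fastforce
  qed
qed simp

lemma flip_adjacent_merging_rungs:
  assumes "2 \<le> count_list w Rung"
  obtains w' where "flip_adjacent w w'" and "count_list w' Rung + 2 = count_list w Rung"
proof -
  obtain j v where v: "path_flip j w v" "Suc (count_list v Rung) = count_list w Rung"
    using path_flip_absorbing_rung[OF rung_mem_if_count_pos[of w]] assms by fastforce
  moreover obtain j' w' where "path_flip j' w' v" "Suc (count_list w' Rung) = count_list v Rung"
    using path_flip_removing_rung[OF rung_mem_if_count_pos[of v]] assms v(2) by fastforce
  ultimately show ?thesis
    using that unfolding flip_adjacent_def by fastforce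
qed

lemma flip_adjacent_single_rungs:
  assumes "count_list w Rung = 1" and "count_list w' Rung = 1"
    and "tiling_width w = tiling_width w'"
  shows "flip_adjacent w w'"
proof -
  obtain j v where v: "path_flip j w v" "count_list v Rung = 0"
    using path_flip_absorbing_rung[OF rung_mem_if_count_pos[of w]] assms(1) by fastforce
  obtain j' v' where v': "path_flip j' w' v'" "count_list v' Rung = 0"
    using path_flip_absorbing_rung[OF rung_mem_if_count_pos[of w']] assms(2) by fastforce
  have "tiling_width v = tiling_width v'"
    using path_flip_width[OF v(1)] path_flip_width[OF v'(1)] assms(3) by simp
  then have "v = v'"
    using v(2) v'(2) rung_free_tilings_eq by (simp add: count_list_0_iff)
  then show ?thesis
    using v v' unfolding flip_adjacent_def by blast
qed

lemma tower_matchings_flip_reachable_few_rungs: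
  assumes "tiling_width w = h" and "tiling_width w' = h"
    and "count_list w Rung \<le> 1" and "count_list w' Rung \<le> 1"
    and "(count_list w Rung + count_list w' Rung) div 2 \<le> n"
  shows "flip_reachable h (tower_matching w) (2 * n) (tower_matching w')"
proof -
  have same_count: "count_list w Rung = count_list w' Rung"
    using assms(1-4) tiling_width_conv_count[of w] tiling_width_conv_count[of w'] by presburger
  show ?thesis
  proof (cases "count_list w Rung = 0")
    case True
    then have "w = w'"
      using same_count assms(1,2) by (intro rung_free_tilings_eq) (simp_all add: count_list_0_iff)
    then show ?thesis
      using flip_reachable_self assms(1) by blast
  next
    case False
    then have "flip_adjacent w w'" and "1 \<le> n"
      using same_count assms by (simp_all add: flip_adjacent_single_rungs)
    then have "flip_reachable h (tower_matching w) (2 + 2 * (n - 1)) (tower_matching w')"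
      using flip_reachable_trans flip_reachable_if_flip_adjacent flip_reachable_self assms(1,2)
      by metis
    moreover have "2 + 2 * (n - 1) = 2 * n"
      using \<open>1 \<le> n\<close> by simp
    ultimately show ?thesis
      by simp
  qed
qed

lemma tower_matchings_flip_reachable:
  assumes "tiling_width w = h" and "tiling_width w' = h"
    and "(count_list w Rung + count_list w' Rung) div 2 \<le> n"
  shows "flip_reachable h (tower_matching w) (2 * n) (tower_matching w')"
  using assms
proof (induction "count_list w Rung + count_list w' Rung" arbitrary: w w' n rule: less_induct)
  case less
  consider "2 \<le> count_list w Rung" | "2 \<le> count_list w' Rung"
    | "count_list w Rung \<le> 1" "count_list w' Rung \<le> 1"
    by linarith
  then show ?case
  proof cases
    case 1
    then obtain u where u: "flip_adjacent w u" "count_list u Rung + 2 = count_list w Rung"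
      by (rule flip_adjacent_merging_rungs)
    have "tiling_width u = h"
      using flip_adjacent_width[OF u(1)] less.prems(1) by simp
    then have "flip_reachable h (tower_matching u) (2 * (n - 1)) (tower_matching w')"
      using less u by (intro less.hyps) simp_all
    moreover have "2 + 2 * (n - 1) = 2 * n"
      using less.prems(3) u(2) by presburger
    ultimately show ?thesis
      using flip_reachable_trans[OF flip_reachable_if_flip_adjacent[OF u(1) less.prems(1)]] by metis
  next
    case 2
    then obtain u where u: "flip_adjacent w' u" "count_list u Rung + 2 = count_list w' Rung"
      by (rule flip_adjacent_merging_rungs)
    have "tiling_width u = h"
      using flip_adjacent_width[OF u(1)] less.prems(2) by simp
    then have "flip_reachable h (tower_matching w) (2 * (n - 1)) (tower_matching u)"
      using less u by (intro less.hyps) simp_all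
    moreover have "2 * (n - 1) + 2 = 2 * n"
      using less.prems(3) u(2) by presburger
    ultimately show ?thesis
      using flip_reachable_trans flip_reachable_if_flip_adjacent[OF flip_adjacent_sym[OF u(1)]]
        \<open>tiling_width u = h\<close> by metis
  next
    case 3
    with less.prems show ?thesis
      by (intro tower_matchings_flip_reachable_few_rungs)
  qed
qed

section \<open>Semi-default perfect matchings are tilings\<close>

context
  fixes h :: nat and M :: "tvert set set"
  assumes perfect: "perfect_matching (tower_edges h) (tower_verts h) M"
begin

lemma vertex_matched: "z \<in> tower_verts h \<Longrightarrow> \<exists>e\<in>M. z \<in> e"
  using perfect unfolding perfect_matching_def by blast

lemma matched_edge_in_tower: "e \<in> M \<Longrightarrow> e \<in> tower_edges h"
  using perfect unfolding perfect_matching_def by blast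

lemma matched_vertex_other_edge_notin:
  "z \<in> tower_verts h \<Longrightarrow> e \<in> M \<Longrightarrow> z \<in> e \<Longrightarrow> z \<in> e' \<Longrightarrow> e' \<noteq> e \<Longrightarrow> e' \<notin> M"
  using perfect unfolding perfect_matching_def by blast

lemma matching_lowest_tile:
  assumes "k < h" and "{Av k, Av (Suc k)} \<notin> M" and "{Bv k, Bv (Suc k)} \<notin> M"
  obtains "{Av (Suc k), Bv (Suc k)} \<in> M"
    | "Suc k < h" and "{Av (Suc k), Av (Suc (Suc k))} \<in> M" and "{Bv (Suc k), Bv (Suc (Suc k))} \<in> M"
proof -
  let ?a = "Av (Suc k)" and ?b = "Bv (Suc k)"
  have "?a \<in> tower_verts h" "?b \<in> tower_verts h"
    using assms(1) by (auto simp: tower_verts_def)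
  then obtain e e' where e: "e \<in> M" "?a \<in> e" and e': "e' \<in> M" "?b \<in> e'"
    using vertex_matched by blast
  consider "e = {?a, ?b}" | "Suc k < h" "e = {?a, Av (Suc (Suc k))}"
    using matched_edge_in_tower[OF e(1)] e assms(2)
    by (cases rule: tower_edges_cases) (auto simp: doubleton_eq_iff)
  then show ?thesis
  proof cases
    case 1
    then show ?thesis
      using that(1) e(1) by simp
  next
    case 2
    from matched_edge_in_tower[OF e'(1)] have "e' = {?b, Bv (Suc (Suc k))}"
    proof (cases rule: tower_edges_cases)
      case (3 i)
      then have "e' = {?a, ?b}"
        using e'(2) by auto
      moreover have "e' \<notin> M"
        using matched_vertex_other_edge_notin[OF \<open>?a \<in> tower_verts h\<close> e] 2 calculation
        by (simp add: doubleton_eq_iff)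
      ultimately show ?thesis
        using e'(1) by simp
    next
      case (5 i)
      then have "i = Suc k \<or> i = k"
        using e'(2) by auto
      then show ?thesis
        using 5 assms(3) e'(1) by auto
    qed (use e'(2) in auto)
    then show ?thesis
      using that(2) 2 e(1) e'(1) by simp
  qed
qed

lemma tiling_edges_in_matching:
  assumes "k \<le> h" and "{Av k, Av (Suc k)} \<notin> M" and "{Bv k, Bv (Suc k)} \<notin> M"
  shows "\<exists>w. tiling_width w = h - k \<and> tiling_edges (Suc k) w \<subseteq> M"
  using assms
proof (induction "h - k" arbitrary: k rule: less_induct)
  case less
  show ?case
  proof (cases "k = h")
    case True
    then show ?thesis
      by (intro exI[of _ "[]"]) simp
  next
    case False
    then have "k < h"
      using less.prems(1) by simp
    have verts: "Av (Suc k) \<in> tower_verts h" "Bv (Suc k) \<in> tower_verts h"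
      using \<open>k < h\<close> by (auto simp: tower_verts_def)
    from \<open>k < h\<close> less.prems(2,3) show ?thesis
    proof (cases rule: matching_lowest_tile)
      case 1
      then have "{Av (Suc k), Av (Suc (Suc k))} \<notin> M" "{Bv (Suc k), Bv (Suc (Suc k))} \<notin> M"
        using matched_vertex_other_edge_notin[OF verts(1) 1] matched_vertex_other_edge_notin[OF verts(2) 1]
        by (simp_all add: doubleton_eq_iff)
      moreover have "h - Suc k < h - k" "Suc k \<le> h"
        using \<open>k < h\<close> by auto
      ultimately obtain w where "tiling_width w = h - Suc k" "tiling_edges (Suc (Suc k)) w \<subseteq> M"
        using less.hyps[of "Suc k"] by blast
      then show ?thesis
        using 1 \<open>k < h\<close> by (intro exI[of _ "Rung # w"]) simp
    next
      case 2
      have "Av (Suc (Suc k)) \<in> tower_verts h" "Bv (Suc (Suc k)) \<in> tower_verts h"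
        using 2 by (auto simp: tower_verts_def)
      then have "{Av (Suc (Suc k)), Av (Suc (Suc (Suc k)))} \<notin> M"
        "{Bv (Suc (Suc k)), Bv (Suc (Suc (Suc k)))} \<notin> M"
        using matched_vertex_other_edge_notin[OF _ 2(2)] matched_vertex_other_edge_notin[OF _ 2(3)]
        by (simp_all add: doubleton_eq_iff)
      moreover have "h - Suc (Suc k) < h - k" "Suc (Suc k) \<le> h"
        using 2 by auto
      ultimately obtain w where "tiling_width w = h - Suc (Suc k)"
        "tiling_edges (Suc (Suc (Suc k))) w \<subseteq> M"
        using less.hyps[of "Suc (Suc k)"] by blast
      then show ?thesis
        using 2 by (intro exI[of _ "Rails # w"]) simp
    qed
  qed
qed

lemma semi_default_eq_tower_matching:
  assumes "semi_default M"
  obtains w where "tiling_width w = h" and "M = tower_matching w"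
proof -
  have start: "{Vv, Av 0} \<in> M" and finish: "{Bv 0, Ww} \<in> M"
    using assms unfolding semi_default_def by auto
  have "Av 0 \<in> tower_verts h" "Bv 0 \<in> tower_verts h"
    by (auto simp: tower_verts_def)
  then have "{Av 0, Av (Suc 0)} \<notin> M" "{Bv 0, Bv (Suc 0)} \<notin> M"
    using matched_vertex_other_edge_notin[OF _ start] matched_vertex_other_edge_notin[OF _ finish]
    by (simp_all add: doubleton_eq_iff)
  then obtain w where w: "tiling_width w = h" "tiling_edges 1 w \<subseteq> M"
    using tiling_edges_in_matching[OF le0] by auto
  have "tower_verts h \<subseteq> \<Union> (tower_matching w)"
    using w(1) Union_tiling_edges[of 1 w] by (auto simp: tower_matching_def tower_verts_def)
  moreover have "tower_matching w \<subseteq> M"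
    using start finish w(2) by (simp add: tower_matching_def)
  ultimately have "tower_matching w = M"
    by (intro perfect_matching_eq_if_covering_subset[OF perfect] tower_edges_meet_verts)
  then show ?thesis
    using that w(1) by simp
qed

end

theorem mainTheorem8:
  fixes h :: nat and M1 M2 :: "tvert set set"
  assumes "perfect_matching (tower_edges h) (tower_verts h) M1"
    and "perfect_matching (tower_edges h) (tower_verts h) M2"
    and "semi_default M1" and "semi_default M2"
  shows "\<exists>Ps. length Ps = 2 * h \<and> well_behaved h M1 Ps \<and> flip_all M1 Ps = M2"
proof -
  obtain w1 where w1: "tiling_width w1 = h" "M1 = tower_matching w1"
    using semi_default_eq_tower_matching[OF assms(1,3)] .
  obtain w2 where w2: "tiling_width w2 = h" "M2 = tower_matching w2"
    using semi_default_eq_tower_matching[OF assms(2,4)] .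
  have "count_list w1 Rung + count_list w2 Rung \<le> h + h"
    using w1(1) w2(1) tiling_width_conv_count[of w1] tiling_width_conv_count[of w2] by simp
  then have "(count_list w1 Rung + count_list w2 Rung) div 2 \<le> h"
    by simp
  then have "flip_reachable h M1 (2 * h) M2"
    using tower_matchings_flip_reachable w1 w2 by simp
  then show ?thesis
    unfolding flip_reachable_def .
qed

end
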